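(* Let $B$ be a compact curve of genus $g\ge2$, $G=\operatorname{Aut}(B)$, let $P_1,\dots,P_n$ be the points of $B$ with nontrivial stabilizer $\Sigma_{P_i}\subset G$, and let $\pi_i\colon G\to G/\Sigma_{P_i}$, $\phi\mapsto\phi\Sigma_{P_i}$. Then: (i) two automorphisms $\phi\neq\phi'$ in $G$ have intersecting graphs in $B\times B$ if and only if $\pi_i(\phi)=\pi_i(\phi')$ for some $i\in\{1,\dots,n\}$; (ii) a subset $\mathcal S\subset G$ of cardinality $m$ consists of automorphisms with pairwise non-intersecting graphs if and only if for each $i\in\{1,\dots,n\}$ the image $\pi_i(\mathcal S)$ has cardinality $m$. In particular $m\le\min_{i=1,\dots,n}|G/\Sigma_{P_i}|$. *)

theory Defs
  imports Main
begin

text \<open>Abstract model: the curve B is the carrier type 'b, and G is a finite group of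
bijections of 'b under composition (the role of Aut(B); finiteness is Hurwitz's theorem
for genus at least 2).\<close>

definition perm_group :: "('b \<Rightarrow> 'b) set \<Rightarrow> bool" where
  "perm_group G \<longleftrightarrow> id \<in> G \<and> (\<forall>\<phi>\<in>G. bij \<phi> \<and> inv \<phi> \<in> G) \<and> (\<forall>\<phi>\<in>G. \<forall>\<psi>\<in>G. \<phi> \<circ> \<psi> \<in> G)"

definition stabilizer :: "('b \<Rightarrow> 'b) set \<Rightarrow> 'b \<Rightarrow> ('b \<Rightarrow> 'b) set" where
  "stabilizer G P = {\<sigma> \<in> G. \<sigma> P = P}"

definition lcoset :: "('b \<Rightarrow> 'b) \<Rightarrow> ('b \<Rightarrow> 'b) set \<Rightarrow> ('b \<Rightarrow> 'b) set" where
  "lcoset \<phi> H = (\<lambda>\<sigma>. \<phi> \<circ> \<sigma>) ` H"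

definition lcosets :: "('b \<Rightarrow> 'b) set \<Rightarrow> ('b \<Rightarrow> 'b) set \<Rightarrow> ('b \<Rightarrow> 'b) set set" where
  "lcosets G H = (\<lambda>\<phi>. lcoset \<phi> H) ` G"

definition graph_of :: "('b \<Rightarrow> 'b) \<Rightarrow> ('b \<times> 'b) set" where
  "graph_of \<phi> = {(x, \<phi> x) | x. True}"

definition nontriv_stab_points :: "('b \<Rightarrow> 'b) set \<Rightarrow> 'b set" where
  "nontriv_stab_points G = {P. stabilizer G P \<noteq> {id}}"

end

theory Submission
  imports Defs
begin

text \<open>Two distinct elements \<phi>, \<psi> of G have intersecting graphs iff they agree at some point x,
i.e. iff the nontrivial element inv \<phi> \<circ> \<psi> fixes x, which forces x to be one of the P i.
On the other hand the coset \<phi> \<Sigma>_x is exactly the set of elements of G that send x to \<phi> x,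
so \<pi>_x(\<phi>) = \<pi>_x(\<psi>) iff \<phi> x = \<psi> x. Hence pairwise disjoint graphs on S amount to
injectivity of every \<pi>_i on S, and the cardinality statements follow.\<close>

lemma perm_group_inv_comp_mem:
  assumes "perm_group G" "\<phi> \<in> G" "\<psi> \<in> G"
  shows "inv \<phi> \<circ> \<psi> \<in> G"
  using assms unfolding perm_group_def by blast

lemma perm_group_comp_inv_comp:
  assumes "perm_group G" "\<phi> \<in> G"
  shows "\<phi> \<circ> (inv \<phi> \<circ> \<psi>) = \<psi>"
proof -
  have "surj \<phi>" using assms unfolding perm_group_def by (simp add: bij_is_surj)
  then show ?thesis by (simp add: o_assoc surj_iff)
qed

lemma perm_group_inv_apply:
  assumes "perm_group G" "\<phi> \<in> G"
  shows "inv \<phi> (\<phi> x) = x"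
  using assms unfolding perm_group_def by (simp add: bij_is_inj)

lemma lcoset_stabilizer:
  assumes G: "perm_group G" and \<phi>: "\<phi> \<in> G"
  shows "lcoset \<phi> (stabilizer G x) = {\<psi> \<in> G. \<psi> x = \<phi> x}"
proof (intro subset_antisym subsetI)
  fix \<psi> assume "\<psi> \<in> lcoset \<phi> (stabilizer G x)"
  then show "\<psi> \<in> {\<psi> \<in> G. \<psi> x = \<phi> x}"
    using G \<phi> unfolding lcoset_def stabilizer_def perm_group_def by auto
next
  fix \<psi> assume "\<psi> \<in> {\<psi> \<in> G. \<psi> x = \<phi> x}"
  then have "inv \<phi> \<circ> \<psi> \<in> stabilizer G x"
    using perm_group_inv_comp_mem[OF G \<phi>] perm_group_inv_apply[OF G \<phi>]
    unfolding stabilizer_def by simp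
  moreover have "\<psi> = \<phi> \<circ> (inv \<phi> \<circ> \<psi>)" by (simp add: perm_group_comp_inv_comp[OF G \<phi>])
  ultimately show "\<psi> \<in> lcoset \<phi> (stabilizer G x)" unfolding lcoset_def by blast
qed

lemma lcoset_stabilizer_eq_iff:
  assumes "perm_group G" "\<phi> \<in> G" "\<psi> \<in> G"
  shows "lcoset \<phi> (stabilizer G x) = lcoset \<psi> (stabilizer G x) \<longleftrightarrow> \<phi> x = \<psi> x"
  using assms by (auto simp: lcoset_stabilizer set_eq_iff)

lemma inj_on_lcoset_stabilizer_iff:
  assumes "perm_group G" "S \<subseteq> G"
  shows "inj_on (\<lambda>\<phi>. lcoset \<phi> (stabilizer G x)) S \<longleftrightarrow> inj_on (\<lambda>\<phi>. \<phi> x) S"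
  using assms lcoset_stabilizer_eq_iff[OF assms(1)] unfolding inj_on_def by (meson subsetD)

lemma graph_of_disjoint_iff: "graph_of \<phi> \<inter> graph_of \<psi> = {} \<longleftrightarrow> (\<forall>x. \<phi> x \<noteq> \<psi> x)"
  unfolding graph_of_def by auto

lemma agreement_point_in_nontriv_stab_points:
  assumes G: "perm_group G" and \<phi>: "\<phi> \<in> G" and \<psi>: "\<psi> \<in> G"
    and "\<phi> \<noteq> \<psi>" and agree: "\<phi> x = \<psi> x"
  shows "x \<in> nontriv_stab_points G"
proof -
  have "inv \<phi> \<circ> \<psi> \<in> stabilizer G x"
    using perm_group_inv_comp_mem[OF G \<phi> \<psi>] perm_group_inv_apply[OF G \<phi>]
    unfolding stabilizer_def by (simp flip: agree)
  moreover have "inv \<phi> \<circ> \<psi> \<noteq> id"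
    using \<open>\<phi> \<noteq> \<psi>\<close> perm_group_comp_inv_comp[OF G \<phi>, of \<psi>] by auto
  ultimately show ?thesis unfolding nontriv_stab_points_def by blast
qed

lemma graph_of_disjoint_iff_nontriv_stab_points:
  assumes "perm_group G" "\<phi> \<in> G" "\<psi> \<in> G" "\<phi> \<noteq> \<psi>"
  shows "graph_of \<phi> \<inter> graph_of \<psi> = {} \<longleftrightarrow> (\<forall>x \<in> nontriv_stab_points G. \<phi> x \<noteq> \<psi> x)"
  using agreement_point_in_nontriv_stab_points[OF assms] by (auto simp: graph_of_disjoint_iff)

lemma pairwise_disjoint_graphs_iff_inj_on:
  assumes G: "perm_group G" and S: "S \<subseteq> G"
  shows "(\<forall>\<phi>\<in>S. \<forall>\<psi>\<in>S. \<phi> \<noteq> \<psi> \<longrightarrow> graph_of \<phi> \<inter> graph_of \<psi> = {}) \<longleftrightarrow>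
         (\<forall>x \<in> nontriv_stab_points G. inj_on (\<lambda>\<phi>. lcoset \<phi> (stabilizer G x)) S)"
proof -
  have "(\<forall>\<phi>\<in>S. \<forall>\<psi>\<in>S. \<phi> \<noteq> \<psi> \<longrightarrow> graph_of \<phi> \<inter> graph_of \<psi> = {}) \<longleftrightarrow>
        (\<forall>\<phi>\<in>S. \<forall>\<psi>\<in>S. \<phi> \<noteq> \<psi> \<longrightarrow> (\<forall>x \<in> nontriv_stab_points G. \<phi> x \<noteq> \<psi> x))"
    using graph_of_disjoint_iff_nontriv_stab_points[OF G] S by (meson subsetD)
  also have "\<dots> \<longleftrightarrow> (\<forall>x \<in> nontriv_stab_points G. inj_on (\<lambda>\<phi>. \<phi> x) S)"
    unfolding inj_on_def by blast
  finally show ?thesis by (simp add: inj_on_lcoset_stabilizer_iff[OF G S])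
qed

theorem lemma5p2:
  fixes G :: "('b \<Rightarrow> 'b) set" and P :: "nat \<Rightarrow> 'b" and n :: nat
  assumes "perm_group G" and "finite G"
    and "bij_betw P {1..n} (nontriv_stab_points G)"
  shows "(\<forall>\<phi>\<in>G. \<forall>\<phi>'\<in>G. \<phi> \<noteq> \<phi>' \<longrightarrow>
            (graph_of \<phi> \<inter> graph_of \<phi>' \<noteq> {} \<longleftrightarrow>
             (\<exists>i\<in>{1..n}. lcoset \<phi> (stabilizer G (P i)) = lcoset \<phi>' (stabilizer G (P i)))))
       \<and> (\<forall>S m. S \<subseteq> G \<and> card S = m \<longrightarrow>
            ((\<forall>\<phi>\<in>S. \<forall>\<phi>'\<in>S. \<phi> \<noteq> \<phi>' \<longrightarrow> graph_of \<phi> \<inter> graph_of \<phi>' = {}) \<longleftrightarrow>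
             (\<forall>i\<in>{1..n}. card ((\<lambda>\<phi>. lcoset \<phi> (stabilizer G (P i))) ` S) = m)))
       \<and> (\<forall>S m. S \<subseteq> G \<and> card S = m \<and>
            (\<forall>\<phi>\<in>S. \<forall>\<phi>'\<in>S. \<phi> \<noteq> \<phi>' \<longrightarrow> graph_of \<phi> \<inter> graph_of \<phi>' = {}) \<longrightarrow>
            (\<forall>i\<in>{1..n}. m \<le> card (lcosets G (stabilizer G (P i)))))"
proof (intro conjI allI impI ballI)
  fix \<phi> \<phi>' assume "\<phi> \<in> G" "\<phi>' \<in> G" "\<phi> \<noteq> \<phi>'"
  with graph_of_disjoint_iff_nontriv_stab_points[OF assms(1) this]
    lcoset_stabilizer_eq_iff[OF assms(1) this(1,2)]
  show "graph_of \<phi> \<inter> graph_of \<phi>' \<noteq> {} \<longleftrightarrow>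
        (\<exists>i\<in>{1..n}. lcoset \<phi> (stabilizer G (P i)) = lcoset \<phi>' (stabilizer G (P i)))"
    by (simp add: bij_betw_imp_surj_on[OF assms(3), symmetric])
next
  fix S :: "('b \<Rightarrow> 'b) set" and m assume S: "S \<subseteq> G \<and> card S = m"
  then have "finite S" using \<open>finite G\<close> finite_subset by blast
  with S show "(\<forall>\<phi>\<in>S. \<forall>\<phi>'\<in>S. \<phi> \<noteq> \<phi>' \<longrightarrow> graph_of \<phi> \<inter> graph_of \<phi>' = {}) \<longleftrightarrow>
        (\<forall>i\<in>{1..n}. card ((\<lambda>\<phi>. lcoset \<phi> (stabilizer G (P i))) ` S) = m)"
    by (simp add: pairwise_disjoint_graphs_iff_inj_on[OF assms(1)] inj_on_iff_eq_card
        bij_betw_imp_surj_on[OF assms(3), symmetric])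
next
  fix S :: "('b \<Rightarrow> 'b) set" and m i
  assume S: "S \<subseteq> G \<and> card S = m \<and>
      (\<forall>\<phi>\<in>S. \<forall>\<phi>'\<in>S. \<phi> \<noteq> \<phi>' \<longrightarrow> graph_of \<phi> \<inter> graph_of \<phi>' = {})" and i: "i \<in> {1..n}"
  have "\<forall>x \<in> nontriv_stab_points G. inj_on (\<lambda>\<phi>. lcoset \<phi> (stabilizer G x)) S"
    using S by (simp add: pairwise_disjoint_graphs_iff_inj_on[OF assms(1) conjunct1[OF S], symmetric])
  then have "inj_on (\<lambda>\<phi>. lcoset \<phi> (stabilizer G (P i))) S"
    using bij_betw_apply[OF assms(3) i] by blast
  moreover have "(\<lambda>\<phi>. lcoset \<phi> (stabilizer G (P i))) ` S \<subseteq> lcosets G (stabilizer G (P i))"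
    using S unfolding lcosets_def by blast
  moreover have "finite (lcosets G (stabilizer G (P i)))"
    using \<open>finite G\<close> unfolding lcosets_def by simp
  ultimately show "m \<le> card (lcosets G (stabilizer G (P i)))"
    using S card_inj_on_le by metis
qed

end
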